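(* Let $(a_n)_{n\ge1}$ be a sequence in $(0,1)$ with $\sum_n(1-a_n)<\infty$, and let $b_n=\lfloor 1/(1-a_n)\rfloor$. Define probability measures on $\mathbb{Z}$ by $\nu_n(1)=\frac{1+2b_n}{3+2b_n}$, $\nu_n(-b_n)=\nu_n(-b_n-1)=\frac{1}{3+2b_n}$, and $\nu_n(k)=0$ otherwise. Then $E(\nu_n)=0$, $m_2(\nu_n)=\frac{2b_n^2+4b_n+2}{3+2b_n}$, and for every ergodic dynamical system $(X,\mathcal{B},m,\tau)$ the sequence $\mu_n=\nu_1*\cdots*\nu_n$ has the strong sweeping out property.
   Context: $(X,\mathcal{B},m)$ is a non-atomic separable probability space and $\tau$ an invertible, measure-preserving, ergodic transformation. For a probability measure $\mu$ on $\mathbb{Z}$, $\mu f(x)=\sum_k\mu(k)f(\tau^kx)$; $\chi_B$ is the indicator of $B$. A sequence of probability measures $(\mu_n)$ on $\mathbb{Z}$ has the strong sweeping out property if for every $\epsilon>0$ there is $B\in\mathcal{B}$ with $m(B)<\epsilon$ such that $\limsup_n\mu_n\chi_B(x)=1$ a.e. and $\liminf_n\mu_n\chi_B(x)=0$ a.e. $E(\nu)=\sum_k k\nu(k)$, $m_2(\nu)=\sum_k k^2\nu(k)$; convolution $(\mu*\nu)(k)=\sum_j\mu(k-j)\nu(j)$. *)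

theory Defs
  imports "HOL-Probability.Probability"
begin

text \<open>Probability measures on the integers are represented by their mass functions
  int \<Rightarrow> real. Sums over the integers are unordered infinite sums.\<close>

definition expect_int :: "(int \<Rightarrow> real) \<Rightarrow> real" where
  "expect_int \<nu> = (\<Sum>\<^sub>\<infinity>k\<in>UNIV. real_of_int k * \<nu> k)"

definition moment2_int :: "(int \<Rightarrow> real) \<Rightarrow> real" where
  "moment2_int \<nu> = (\<Sum>\<^sub>\<infinity>k\<in>UNIV. (real_of_int k)^2 * \<nu> k)"

definition conv_int :: "(int \<Rightarrow> real) \<Rightarrow> (int \<Rightarrow> real) \<Rightarrow> (int \<Rightarrow> real)" where
  "conv_int \<mu> \<nu> = (\<lambda>k. \<Sum>\<^sub>\<infinity>j\<in>UNIV. \<mu> (k - j) * \<nu> j)"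

definition tpow :: "'a measure \<Rightarrow> ('a \<Rightarrow> 'a) \<Rightarrow> int \<Rightarrow> 'a \<Rightarrow> 'a" where
  "tpow M T k = (if 0 \<le> k then T ^^ nat k else (the_inv_into (space M) T) ^^ nat (- k))"

definition apply_meas :: "'a measure \<Rightarrow> ('a \<Rightarrow> 'a) \<Rightarrow> (int \<Rightarrow> real) \<Rightarrow> ('a \<Rightarrow> real) \<Rightarrow> 'a \<Rightarrow> real" where
  "apply_meas M T \<mu> f x = (\<Sum>\<^sub>\<infinity>k\<in>UNIV. \<mu> k * f (tpow M T k x))"

definition atom :: "'a measure \<Rightarrow> 'a set \<Rightarrow> bool" where
  "atom M A \<longleftrightarrow> A \<in> sets M \<and> measure M A > 0 \<and>
     (\<forall>B\<in>sets M. B \<subseteq> A \<longrightarrow> measure M B = 0 \<or> measure M B = measure M A)"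

definition non_atomic :: "'a measure \<Rightarrow> bool" where
  "non_atomic M \<longleftrightarrow> (\<nexists>A. atom M A)"

definition separable_measure :: "'a measure \<Rightarrow> bool" where
  "separable_measure M \<longleftrightarrow> (\<exists>C. countable C \<and> C \<subseteq> sets M \<and>
     (\<forall>A\<in>sets M. \<forall>e>0. \<exists>D\<in>C. measure M ((A - D) \<union> (D - A)) < e))"

definition invertible_mp :: "'a measure \<Rightarrow> ('a \<Rightarrow> 'a) \<Rightarrow> bool" where
  "invertible_mp M T \<longleftrightarrow> bij_betw T (space M) (space M) \<and>
     T \<in> measurable M M \<and> the_inv_into (space M) T \<in> measurable M M \<and>
     (\<forall>A\<in>sets M. measure M (T -` A \<inter> space M) = measure M A)"

definition ergodic_map :: "'a measure \<Rightarrow> ('a \<Rightarrow> 'a) \<Rightarrow> bool" where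
  "ergodic_map M T \<longleftrightarrow> (\<forall>A\<in>sets M. T -` A \<inter> space M = A \<longrightarrow>
     measure M A = 0 \<or> measure M A = 1)"

definition ergodic_system :: "'a measure \<Rightarrow> ('a \<Rightarrow> 'a) \<Rightarrow> bool" where
  "ergodic_system M T \<longleftrightarrow> prob_space M \<and> non_atomic M \<and> separable_measure M \<and>
     invertible_mp M T \<and> ergodic_map M T"

definition strong_sweeping_out :: "'a measure \<Rightarrow> ('a \<Rightarrow> 'a) \<Rightarrow> (nat \<Rightarrow> int \<Rightarrow> real) \<Rightarrow> bool" where
  "strong_sweeping_out M T \<mu> \<longleftrightarrow> (\<forall>e>0. \<exists>B\<in>sets M. measure M B < e \<and>
     (AE x in M. limsup (\<lambda>n. ereal (apply_meas M T (\<mu> n) (indicator B) x)) = 1) \<and>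
     (AE x in M. liminf (\<lambda>n. ereal (apply_meas M T (\<mu> n) (indicator B) x)) = 0))"

definition nu_b :: "int \<Rightarrow> int \<Rightarrow> real" where
  "nu_b b k = (if k = 1 then (1 + 2 * of_int b) / (3 + 2 * of_int b)
     else if k = - b \<or> k = - b - 1 then 1 / (3 + 2 * of_int b) else 0)"

primrec mu_seq :: "(nat \<Rightarrow> int \<Rightarrow> real) \<Rightarrow> nat \<Rightarrow> int \<Rightarrow> real" where
  "mu_seq \<nu> 0 = (\<lambda>k. if k = 0 then 1 else 0)"
| "mu_seq \<nu> (Suc n) = conv_int (mu_seq \<nu> n) (\<nu> (Suc n))"

end

theory Submission
  imports Defs
begin

text \<open>
  For the convolution powers
  mu_n = nu_(b_1) * ... * nu_(b_n) the key observation is that convolving with nu_b translates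
  the measure by 1 except for the mass back_mass b = 2/(3 + 2b). Since
  back_mass (floor (1/(1 - a))) \<le> 1 - a, these lost masses are summable, so mu_n carries mass
  \<ge> 1 - \<epsilon> on a window {n - K..n} whose length K does not depend on n.

  The dynamical part shows that such window-concentrated measures sweep out in every invertible
  ergodic system without atoms. From a rapidly shrinking sequence of small sets we carve towers
  and build a set B of small measure such that almost every orbit (by recurrence, a consequence
  of ergodicity) contains arbitrarily long runs inside B and arbitrarily long runs outside B.
  Averaging the indicator of B over a window inside such a run gives values near 1, resp. near 0.
\<close>

lemma infsum_finite_support:
  fixes f :: "'a \<Rightarrow> 'b::{comm_monoid_add, t2_space}"
  assumes "finite S" and "\<And>k. k \<notin> S \<Longrightarrow> f k = 0"
  shows "(\<Sum>\<^sub>\<infinity>k\<in>UNIV. f k) = sum f S"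
proof -
  have "(\<Sum>\<^sub>\<infinity>k\<in>UNIV. f k) = (\<Sum>\<^sub>\<infinity>k\<in>S. f k)"
    by (rule infsum_cong_neutral) (use assms(2) in auto)
  then show ?thesis using assms(1) by simp
qed

text \<open>Integrating against nu_b: for b \<ge> 1 the three support points 1, -b, -b-1 are distinct.\<close>
lemma infsum_nu_b:
  fixes g :: "int \<Rightarrow> real"
  assumes "b \<ge> 1"
  shows "(\<Sum>\<^sub>\<infinity>k\<in>UNIV. g k * nu_b b k) = ((1 + 2 * of_int b) * g 1 + g (-b) + g (-b-1)) / (3 + 2 * of_int b)"
proof -
  have "(\<Sum>\<^sub>\<infinity>k\<in>UNIV. g k * nu_b b k) = (\<Sum>k\<in>{1, -b, -b-1}. g k * nu_b b k)"
    by (rule infsum_finite_support) (auto simp: nu_b_def)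
  also have "\<dots> = g 1 * nu_b b 1 + g (-b) * nu_b b (-b) + g (-b-1) * nu_b b (-b-1)"
    using assms by simp
  finally show ?thesis
    using assms by (simp add: nu_b_def add_divide_distrib algebra_simps)
qed

lemma expect_nu_b: "b \<ge> 1 \<Longrightarrow> expect_int (nu_b b) = 0"
  unfolding expect_int_def by (simp add: infsum_nu_b algebra_simps)

lemma moment2_nu_b:
  "b \<ge> 1 \<Longrightarrow> moment2_int (nu_b b) = (2 * (of_int b)^2 + 4 * of_int b + 2) / (3 + 2 * of_int b)"
  unfolding moment2_int_def infsum_nu_b[where g = "\<lambda>k. (real_of_int k)^2"]
  by (simp add: power2_eq_square algebra_simps)

lemma conv_nu_b:
  assumes "b \<ge> 1"
  shows "conv_int \<mu> (nu_b b) k = ((1 + 2 * of_int b) * \<mu> (k - 1) + \<mu> (k + b) + \<mu> (k + b + 1)) / (3 + 2 * of_int b)"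
  unfolding conv_int_def infsum_nu_b[OF assms, where g = "\<lambda>j. \<mu> (k - j)"]
  by (simp add: algebra_simps)

definition finite_prob :: "(int \<Rightarrow> real) \<Rightarrow> bool" where
  "finite_prob \<mu> \<longleftrightarrow> (\<forall>k. 0 \<le> \<mu> k) \<and>
     (\<exists>lo hi. (\<forall>k. k \<notin> {lo..hi} \<longrightarrow> \<mu> k = 0) \<and> sum \<mu> {lo..hi} = 1)"

lemma finite_prob_sum_le_1:
  assumes "finite_prob \<mu>" and "finite W"
  shows "sum \<mu> W \<le> 1"
proof -
  from assms(1) obtain lo hi where nonneg: "\<And>k. 0 \<le> \<mu> k"
    and supp: "\<And>k. k \<notin> {lo..hi} \<Longrightarrow> \<mu> k = 0" and mass: "sum \<mu> {lo..hi} = 1"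
    unfolding finite_prob_def by blast
  have "sum \<mu> W = sum \<mu> (W \<inter> {lo..hi})"
    by (rule sum.mono_neutral_right) (use assms(2) supp in auto)
  also have "\<dots> \<le> sum \<mu> {lo..hi}"
    by (rule sum_mono2) (use nonneg in auto)
  finally show ?thesis using mass by simp
qed

lemma sum_shift_int: "(\<Sum>k\<in>{l..h}. f (k + c)) = (\<Sum>k\<in>{l+c..h+c::int}. f k)"
  by (rule sum.reindex_bij_witness[of _ "\<lambda>k. k - c" "\<lambda>k. k + c"]) auto

lemma conv_nu_b_window_sum:
  assumes "b \<ge> 1"
  shows "(\<Sum>k\<in>{l..h}. conv_int \<mu> (nu_b b) k) =
     ((1 + 2 * of_int b) * sum \<mu> {l-1..h-1} + sum \<mu> {l+b..h+b} + sum \<mu> {l+b+1..h+b+1}) / (3 + 2 * of_int b)"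
proof -
  have "(\<Sum>k\<in>{l..h}. conv_int \<mu> (nu_b b) k) =
     ((1 + 2 * of_int b) * (\<Sum>k\<in>{l..h}. \<mu> (k + -1)) + (\<Sum>k\<in>{l..h}. \<mu> (k + b)) + (\<Sum>k\<in>{l..h}. \<mu> (k + (b + 1)))) / (3 + 2 * of_int b)"
    by (simp add: conv_nu_b[OF assms] sum_divide_distrib[symmetric] sum.distrib sum_distrib_left add.assoc)
  then show ?thesis by (simp only: sum_shift_int) (simp add: algebra_simps)
qed

text \<open>Convolution with nu_b widens the support interval to the left by b + 1 and to the right by 1.\<close>
lemma finite_prob_conv_nu_b:
  assumes "finite_prob \<mu>" and b: "b \<ge> 1"
  shows "finite_prob (conv_int \<mu> (nu_b b))"
proof -
  from assms(1) obtain lo hi where nonneg: "\<And>k. 0 \<le> \<mu> k"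
    and supp: "\<And>k. k \<notin> {lo..hi} \<Longrightarrow> \<mu> k = 0" and mass: "sum \<mu> {lo..hi} = 1"
    unfolding finite_prob_def by blast
  have shifted_mass: "sum \<mu> {lo - b - 1 + c..hi + 1 + c} = 1" if "c \<in> {-1, b, b + 1}" for c
  proof -
    have "sum \<mu> {lo - b - 1 + c..hi + 1 + c} = sum \<mu> {lo..hi}"
      by (rule sum.mono_neutral_right) (use that b supp in auto)
    then show ?thesis using mass by simp
  qed
  have "(\<Sum>k\<in>{lo-b-1..hi+1}. conv_int \<mu> (nu_b b) k) = 1"
    unfolding conv_nu_b_window_sum[OF b]
    using shifted_mass[of "-1"] shifted_mass[of b] shifted_mass[of "b + 1"] b
    by (simp add: algebra_simps)
  moreover have "conv_int \<mu> (nu_b b) k = 0" if "k \<notin> {lo-b-1..hi+1}" for k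
  proof -
    have "\<mu> (k - 1) = 0" "\<mu> (k + b) = 0" "\<mu> (k + b + 1) = 0"
      using that b by (auto intro!: supp)
    then show ?thesis using b by (simp add: conv_nu_b)
  qed
  moreover have "0 \<le> conv_int \<mu> (nu_b b) k" for k
    using nonneg b by (simp add: conv_nu_b)
  ultimately show ?thesis unfolding finite_prob_def by blast
qed

text \<open>Two lower bounds for the mass of the convolution on a window: spreading the window
  by the support of nu_b captures all mass, while shifting it by one captures the
  mass sent to the point 1.\<close>
lemma conv_nu_b_window_spread:
  assumes "\<And>k. 0 \<le> \<mu> k" and b: "b \<ge> 1"
  shows "sum \<mu> {lo..hi} \<le> (\<Sum>k\<in>{lo-b-1..hi+1}. conv_int \<mu> (nu_b b) k)"
proof -
  have wider: "sum \<mu> {lo..hi} \<le> sum \<mu> {lo - b - 1 + c..hi + 1 + c}" if "c \<in> {-1, b, b + 1}" for c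
    by (rule sum_mono2) (use that b assms(1) in auto)
  have "(1 + 2 * of_int b) * sum \<mu> {lo..hi} \<le> (1 + 2 * of_int b) * sum \<mu> {lo-b-1-1..hi+1-1}"
    using wider[of "-1"] b by (intro mult_left_mono) auto
  moreover have "sum \<mu> {lo..hi} \<le> sum \<mu> {lo-b-1+b..hi+1+b}"
    using wider[of b] by simp
  moreover have "sum \<mu> {lo..hi} \<le> sum \<mu> {lo-b-1+b+1..hi+1+b+1}"
    using wider[of "b + 1"] by (simp add: add.assoc)
  ultimately have "sum \<mu> {lo..hi} * (3 + 2 * of_int b) \<le>
      (1 + 2 * of_int b) * sum \<mu> {lo-b-1-1..hi+1-1} + sum \<mu> {lo-b-1+b..hi+1+b} + sum \<mu> {lo-b-1+b+1..hi+1+b+1}"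
    by (simp add: algebra_simps)
  moreover have "3 + 2 * real_of_int b > 0" using b by linarith
  ultimately show ?thesis
    unfolding conv_nu_b_window_sum[OF b] by (simp add: pos_le_divide_eq)
qed

lemma conv_nu_b_window_shift:
  assumes "\<And>k. 0 \<le> \<mu> k" and b: "b \<ge> 1"
  shows "(1 + 2 * of_int b) / (3 + 2 * of_int b) * sum \<mu> {lo..hi} \<le> (\<Sum>k\<in>{lo+1..hi+1}. conv_int \<mu> (nu_b b) k)"
proof -
  let ?S = "\<lambda>c. sum \<mu> {lo+1+c..hi+1+c}"
  have "0 \<le> sum \<mu> A" for A using assms(1) by (rule sum_nonneg)
  then have "(1 + 2 * of_int b) * sum \<mu> {lo..hi} \<le> (1 + 2 * of_int b) * sum \<mu> {lo..hi} + ?S b + ?S (b + 1)"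
    by simp
  then have "(1 + 2 * of_int b) * sum \<mu> {lo..hi} / (3 + 2 * of_int b) \<le>
      ((1 + 2 * of_int b) * sum \<mu> {lo..hi} + ?S b + ?S (b + 1)) / (3 + 2 * of_int b)"
    by (rule divide_right_mono) (use b in simp)
  then show ?thesis
    unfolding conv_nu_b_window_sum[OF b] by (simp add: algebra_simps)
qed

lemma finite_prob_mu_seq:
  assumes "\<forall>n\<ge>1. bs n \<ge> (1::int)"
  shows "finite_prob (mu_seq (\<lambda>n. nu_b (bs n)) n)"
proof (induction n)
  case 0
  show ?case unfolding finite_prob_def by (auto intro!: exI[of _ 0])
next
  case (Suc n)
  then show ?case using assms by (simp add: finite_prob_conv_nu_b)
qed

text \<open>The mass that nu_b does not put on the point 1.\<close>
definition back_mass :: "int \<Rightarrow> real" where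
  "back_mass b = 2 / (3 + 2 * of_int b)"

lemma back_mass_nonneg: "b \<ge> 1 \<Longrightarrow> 0 \<le> back_mass b"
  by (simp add: back_mass_def)

lemma back_mass_complement: "b \<ge> 1 \<Longrightarrow> (1 + 2 * of_int b) / (3 + 2 * of_int b) = 1 - back_mass b"
  unfolding back_mass_def by (simp add: field_simps)

text \<open>Up to time N the window grows with the support, so it keeps all mass; afterwards it only
  moves right by one at each step and loses at most back_mass (bs i) at step i.\<close>
lemma mu_seq_window_mass:
  assumes hb: "\<forall>n\<ge>1. bs n \<ge> (1::int)"
  shows "\<exists>c\<ge>0. c \<le> (\<Sum>i\<in>{1..min n N}. bs i + 2) \<and>
     1 - (\<Sum>i\<in>{N<..n}. back_mass (bs i)) \<le> sum (mu_seq (\<lambda>n. nu_b (bs n)) n) {int n - c..int n}"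
proof (induction n)
  case 0
  show ?case by (auto intro!: exI[of _ 0])
next
  case (Suc n)
  let ?mu = "mu_seq (\<lambda>n. nu_b (bs n)) n"
  have b: "bs (Suc n) \<ge> 1" using hb by auto
  have prob: "finite_prob ?mu" using finite_prob_mu_seq[OF hb] .
  then have nonneg: "\<And>k. 0 \<le> ?mu k" unfolding finite_prob_def by blast
  from Suc obtain c where c: "c \<ge> 0" "c \<le> (\<Sum>i\<in>{1..min n N}. bs i + 2)"
     "1 - (\<Sum>i\<in>{N<..n}. back_mass (bs i)) \<le> sum ?mu {int n - c..int n}" by blast
  show ?case
  proof (cases "Suc n \<le> N")
    case True
    have window: "{int n - c - bs (Suc n) - 1..int n + 1} = {int (Suc n) - (c + bs (Suc n) + 2)..int (Suc n)}"
      by auto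
    have "min (Suc n) N = Suc n" "min n N = n" "{N<..Suc n} = {}" "{N<..n} = {}"
      using True by auto
    then show ?thesis
      using conv_nu_b_window_spread[where \<mu> = "?mu", OF nonneg b, where lo = "int n - c" and hi = "int n"] c b
      unfolding window by (intro exI[of _ "c + bs (Suc n) + 2"]) auto
  next
    case False
    let ?S = "sum ?mu {int n - c..int n}" and ?q = "back_mass (bs (Suc n))"
    have window: "{int n - c + 1..int n + 1} = {int (Suc n) - c..int (Suc n)}" by auto
    have shift: "(1 - ?q) * ?S \<le> sum (mu_seq (\<lambda>n. nu_b (bs n)) (Suc n)) {int (Suc n) - c..int (Suc n)}"
      using conv_nu_b_window_shift[where \<mu> = "?mu", OF nonneg b, where lo = "int n - c" and hi = "int n"]
      unfolding back_mass_complement[OF b] window by simp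
    have "?q * ?S \<le> ?q"
      using finite_prob_sum_le_1[OF prob, of "{int n - c..int n}"] b
      by (intro mult_left_le) (auto simp: back_mass_def)
    then have loss: "?S - ?q \<le> (1 - ?q) * ?S"
      by (simp add: algebra_simps)
    have "min (Suc n) N = min n N" "{N<..Suc n} = insert (Suc n) {N<..n}"
      using False by auto
    then show ?thesis
      using shift loss c by (intro exI[of _ c]) auto
  qed
qed

lemma mu_seq_concentrated:
  assumes hb: "\<forall>n\<ge>1. bs n \<ge> (1::int)" and summable: "summable (\<lambda>i. back_mass (bs (Suc i)))"
    and "\<epsilon> > 0"
  shows "\<exists>K::nat. \<forall>n. 1 - \<epsilon> \<le> sum (mu_seq (\<lambda>n. nu_b (bs n)) n) {int n - int K..int n}"
proof -
  define g where "g i = back_mass (bs (Suc i))" for i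
  have g_nonneg: "0 \<le> g i" for i
    using hb[rule_format, of "Suc i"] unfolding g_def by (simp add: back_mass_nonneg)
  from suminf_exist_split[OF \<open>\<epsilon> > 0\<close> summable] obtain N
    where N: "norm (\<Sum>i. g (i + N)) < \<epsilon>" unfolding g_def by blast
  define K where "K = nat (\<Sum>i\<in>{1..N}. bs i + 2)"
  have "1 - \<epsilon> \<le> sum (mu_seq (\<lambda>n. nu_b (bs n)) n) {int n - int K..int n}" for n
  proof -
    let ?mu = "mu_seq (\<lambda>n. nu_b (bs n)) n"
    have nonneg: "\<And>k. 0 \<le> ?mu k"
      using finite_prob_mu_seq[OF hb] unfolding finite_prob_def by blast
    from mu_seq_window_mass[OF hb, of n N] obtain c where c: "c \<ge> 0" "c \<le> (\<Sum>i\<in>{1..min n N}. bs i + 2)"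
      "1 - (\<Sum>i\<in>{N<..n}. back_mass (bs i)) \<le> sum ?mu {int n - c..int n}" by blast
    have "(\<Sum>i\<in>{1..min n N}. bs i + 2) \<le> (\<Sum>i\<in>{1..N}. bs i + 2)"
      by (rule sum_mono2) (use hb in auto)
    then have "c \<le> int K" using c unfolding K_def by simp
    then have "sum ?mu {int n - c..int n} \<le> sum ?mu {int n - int K..int n}"
      by (intro sum_mono2) (use nonneg in auto)
    moreover have "(\<Sum>i\<in>{N<..n}. back_mass (bs i)) = (\<Sum>j\<in>{..<n-N}. g (j + N))"
      unfolding g_def by (rule sum.reindex_bij_witness[of _ "\<lambda>j. Suc (j + N)" "\<lambda>i. i - Suc N"]) auto
    moreover have "\<dots> \<le> (\<Sum>j. g (j + N))"
      by (rule sum_le_suminf)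
        (use summable_ignore_initial_segment[OF summable[folded g_def]] g_nonneg in auto)
    ultimately show ?thesis using c(3) N by simp
  qed
  then show ?thesis by blast
qed

text \<open>The parameters of the theorem: b = floor (1/(1 - x)) satisfies b \<ge> 1 and the mass
  moved away from 1 is at most 1 - x, so it is summable whenever 1 - a n is.\<close>
lemma back_mass_floor:
  assumes "0 < x" "x < (1::real)"
  shows "1 \<le> \<lfloor>1 / (1 - x)\<rfloor>" "back_mass \<lfloor>1 / (1 - x)\<rfloor> \<le> 1 - x"
proof -
  define t where "t = 1 / (1 - x)"
  have t_ge: "1 \<le> t" unfolding t_def using assms by (simp add: field_simps)
  then show "1 \<le> \<lfloor>1 / (1 - x)\<rfloor>" unfolding t_def by linarith
  have "2 * t \<le> 3 + 2 * of_int \<lfloor>t\<rfloor>" by linarith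
  then have "2 / (3 + 2 * of_int \<lfloor>t\<rfloor>) \<le> 1 / t"
    using t_ge by (simp add: field_simps)
  then show "back_mass \<lfloor>1 / (1 - x)\<rfloor> \<le> 1 - x"
    unfolding back_mass_def t_def[symmetric] by (simp add: t_def)
qed

lemma weighted_mass_bounds:
  fixes \<mu> g :: "int \<Rightarrow> real"
  assumes \<mu>: "finite_prob \<mu>" and g: "\<And>k. 0 \<le> g k" "\<And>k. g k \<le> 1" and "finite W"
  shows "(\<And>k. k \<in> W \<Longrightarrow> g k = 1) \<Longrightarrow> sum \<mu> W \<le> (\<Sum>\<^sub>\<infinity>k\<in>UNIV. \<mu> k * g k)"
    and "(\<And>k. k \<in> W \<Longrightarrow> g k = 0) \<Longrightarrow> (\<Sum>\<^sub>\<infinity>k\<in>UNIV. \<mu> k * g k) \<le> 1 - sum \<mu> W"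
proof -
  from \<mu> obtain lo hi where nonneg: "\<And>k. 0 \<le> \<mu> k"
    and supp: "\<And>k. k \<notin> {lo..hi} \<Longrightarrow> \<mu> k = 0" and mass: "sum \<mu> {lo..hi} = 1"
    unfolding finite_prob_def by blast
  have infsum_eq: "(\<Sum>\<^sub>\<infinity>k\<in>UNIV. \<mu> k * h k) = (\<Sum>k\<in>{lo..hi}. \<mu> k * h k)" for h
    by (rule infsum_finite_support) (use supp in auto)
  have W_eq: "sum \<mu> W = (\<Sum>k\<in>{lo..hi} \<inter> W. \<mu> k * 1)"
    using \<open>finite W\<close> by (simp, intro sum.mono_neutral_right) (auto intro!: supp)
  have lower: "sum \<mu> W \<le> (\<Sum>\<^sub>\<infinity>k\<in>UNIV. \<mu> k * h k)"
    if h: "\<And>k. 0 \<le> h k" "\<And>k. k \<in> W \<Longrightarrow> h k = 1" for h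
  proof -
    have "(\<Sum>k\<in>{lo..hi} \<inter> W. \<mu> k * 1) = (\<Sum>k\<in>{lo..hi} \<inter> W. \<mu> k * h k)"
      using h(2) by simp
    also have "\<dots> \<le> (\<Sum>k\<in>{lo..hi}. \<mu> k * h k)"
      by (rule sum_mono2) (use nonneg h(1) in auto)
    finally show ?thesis unfolding W_eq infsum_eq .
  qed
  show "(\<And>k. k \<in> W \<Longrightarrow> g k = 1) \<Longrightarrow> sum \<mu> W \<le> (\<Sum>\<^sub>\<infinity>k\<in>UNIV. \<mu> k * g k)"
    using lower g(1) by blast
  assume "\<And>k. k \<in> W \<Longrightarrow> g k = 0"
  then have "sum \<mu> W \<le> (\<Sum>\<^sub>\<infinity>k\<in>UNIV. \<mu> k * (1 - g k))"
    using g(2) by (intro lower) auto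
  also have "(\<Sum>\<^sub>\<infinity>k\<in>UNIV. \<mu> k * (1 - g k)) = 1 - (\<Sum>\<^sub>\<infinity>k\<in>UNIV. \<mu> k * g k)"
    unfolding infsum_eq using mass by (simp add: algebra_simps sum_subtractf)
  finally show "(\<Sum>\<^sub>\<infinity>k\<in>UNIV. \<mu> k * g k) \<le> 1 - sum \<mu> W" by simp
qed

lemma measure_preimage_funpow:
  assumes S: "S \<in> measurable M M"
    and preserving: "\<And>A. A \<in> sets M \<Longrightarrow> measure M (S -` A \<inter> space M) = measure M A"
    and A: "A \<in> sets M"
  shows "measure M ((S ^^ n) -` A \<inter> space M) = measure M A"
proof (induction n)
  case 0
  then show ?case using sets.sets_into_space[OF A] by (simp add: Int_absorb2)
next
  case (Suc n)
  have eq: "(S ^^ Suc n) -` A \<inter> space M = S -` ((S ^^ n) -` A \<inter> space M) \<inter> space M"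
    using measurable_space[OF S] by (auto simp: funpow_swap1)
  have pre_sets: "(S ^^ n) -` A \<inter> space M \<in> sets M"
    using measurable_sets[OF measurable_compose_n[OF S] A] .
  show ?case unfolding eq preserving[OF pre_sets] by (rule Suc)
qed

lemma rapid_decay:
  fixes w :: "nat \<Rightarrow> real"
  assumes nonneg: "\<And>n. 0 \<le> w n" and step: "\<And>n. (real n + 2) * w (Suc n) \<le> w n / 4"
    and "k < j"
  shows "(real j + 1) * w j \<le> w k * (1/4) ^ (j - k)"
  using \<open>k < j\<close>
proof (induction j)
  case 0
  then show ?case by simp
next
  case (Suc j)
  show ?case
  proof (cases "k = j")
    case True
    then show ?thesis using step[of k] by (simp add: add.commute)
  next
    case False
    then have "k < j" using Suc.prems by simp
    have "(real (Suc j) + 1) * w (Suc j) \<le> w j / 4" using step[of j] by (simp add: add.commute)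
    also have "\<dots> \<le> (real j + 1) * w j / 4" using nonneg[of j] by (simp add: distrib_right)
    also have "\<dots> \<le> w k * (1/4) ^ (j - k) / 4" using Suc.IH[OF \<open>k < j\<close>] by simp
    also have "\<dots> = w k * (1/4) ^ (Suc j - k)" using \<open>k < j\<close> by (simp add: Suc_diff_le)
    finally show ?thesis .
  qed
qed

context finite_measure
begin

lemma measure_UN_atMost_le:
  assumes "\<And>s. s \<le> L \<Longrightarrow> X s \<in> sets M" and "\<And>s. s \<le> L \<Longrightarrow> measure M (X s) \<le> c"
  shows "measure M (\<Union>s\<in>{..L::nat}. X s) \<le> (real L + 1) * c"
proof -
  have "measure M (\<Union>s\<in>{..L}. X s) \<le> (\<Sum>s\<in>{..L}. measure M (X s))"
    by (rule measure_UNION_le) (use assms in auto)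
  also have "\<dots> \<le> (\<Sum>s\<in>{..L}. c)" by (rule sum_mono) (use assms in auto)
  finally show ?thesis by (simp add: add.commute)
qed

lemma measure_UN_geometric_le:
  assumes R: "\<And>n. R n \<in> sets M" and bound: "\<And>n. measure M (R n) \<le> c * (1/4) ^ n"
  shows "measure M (\<Union>n. R n) \<le> c * (4/3)"
proof -
  have geometric: "summable (\<lambda>n. c * (1/4::real) ^ n)"
    by (intro summable_mult summable_geometric) simp
  then have "summable (\<lambda>n. measure M (R n))"
    by (rule summable_comparison_test[rotated]) (use bound in auto)
  then have "measure M (\<Union>n. R n) \<le> (\<Sum>n. measure M (R n))"
    by (intro finite_measure_subadditive_countably) (use R in auto)
  also have "\<dots> \<le> (\<Sum>n. c * (1/4::real) ^ n)"
    by (rule suminf_le) (use bound \<open>summable (\<lambda>n. measure M (R n))\<close> geometric in auto)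
  also have "\<dots> = c * (4/3)"
    by (subst suminf_mult) (simp_all add: suminf_geometric)
  finally show ?thesis .
qed

lemma measure_Diff_UN_pos:
  assumes A: "A \<in> sets M" "0 < measure M A"
    and R: "\<And>n. R n \<in> sets M" and bound: "\<And>n. measure M (R n) \<le> measure M A / 4 * (1/4) ^ n"
  shows "0 < measure M (A - (\<Union>n. R n))"
proof -
  have "measure M (A \<inter> (\<Union>n. R n)) \<le> measure M (\<Union>n. R n)"
    by (rule finite_measure_mono) (use R in auto)
  also have "\<dots> \<le> measure M A / 4 * (4/3)"
    by (rule measure_UN_geometric_le[OF R bound])
  finally have "measure M (A \<inter> (\<Union>n. R n)) < measure M A" using A(2) by simp
  moreover have "measure M (A - (\<Union>n. R n)) = measure M A - measure M (A \<inter> (\<Union>n. R n))"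
    by (rule finite_measure_Diff') (use A(1) R in auto)
  ultimately show ?thesis by simp
qed

end

lemma limsup_eq_1_if_frequently_near_1:
  fixes X :: "nat \<Rightarrow> real"
  assumes le1: "\<And>n. X n \<le> 1" and near: "\<And>\<epsilon> N. 0 < \<epsilon> \<Longrightarrow> \<exists>n\<ge>N. 1 - \<epsilon> \<le> X n"
  shows "limsup (\<lambda>n. ereal (X n)) = 1"
proof (rule antisym)
  show "limsup (\<lambda>n. ereal (X n)) \<le> 1"
    by (rule Limsup_bounded) (use le1 in auto)
  show "1 \<le> limsup (\<lambda>n. ereal (X n))"
  proof (rule ereal_le_epsilon2)
    fix \<epsilon> :: real assume "0 < \<epsilon>"
    have "ereal (1 - \<epsilon>) \<le> limsup (\<lambda>n. ereal (X n))"
      unfolding limsup_INF_SUP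
    proof (rule INF_greatest)
      fix N :: nat
      from near[OF \<open>0 < \<epsilon>\<close>, of N] obtain n where "n \<ge> N" "1 - \<epsilon> \<le> X n" by blast
      then show "ereal (1 - \<epsilon>) \<le> (SUP n\<in>{N..}. ereal (X n))"
        by (intro SUP_upper2[of n]) auto
    qed
    then show "1 \<le> limsup (\<lambda>n. ereal (X n)) + ereal \<epsilon>"
      by (metis add_right_mono diff_add_cancel one_ereal_def plus_ereal.simps(1))
  qed
qed

lemma liminf_eq_0_if_frequently_near_0:
  fixes X :: "nat \<Rightarrow> real"
  assumes ge0: "\<And>n. 0 \<le> X n" and near: "\<And>\<epsilon> N. 0 < \<epsilon> \<Longrightarrow> \<exists>n\<ge>N. X n \<le> \<epsilon>"
  shows "liminf (\<lambda>n. ereal (X n)) = 0"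
proof (rule antisym)
  show "0 \<le> liminf (\<lambda>n. ereal (X n))"
    by (rule Liminf_bounded) (use ge0 in auto)
  show "liminf (\<lambda>n. ereal (X n)) \<le> 0"
  proof (rule ereal_le_epsilon2)
    fix \<epsilon> :: real assume "0 < \<epsilon>"
    have "liminf (\<lambda>n. ereal (X n)) \<le> ereal \<epsilon>"
      unfolding liminf_SUP_INF
    proof (rule SUP_least)
      fix N :: nat
      from near[OF \<open>0 < \<epsilon>\<close>, of N] obtain n where "n \<ge> N" "X n \<le> \<epsilon>" by blast
      then show "(INF n\<in>{N..}. ereal (X n)) \<le> ereal \<epsilon>"
        by (intro INF_lower2[of n]) auto
    qed
    then show "liminf (\<lambda>n. ereal (X n)) \<le> 0 + ereal \<epsilon>" by simp
  qed
qed

lemma tpow_window: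
  assumes "\<And>j. n - K \<le> j \<Longrightarrow> j \<le> n \<Longrightarrow> P ((T ^^ j) x)" and "K \<le> n"
    and "k \<in> {int n - int K..int n}"
  shows "P (tpow M T k x)"
proof -
  have "0 \<le> k" "n - K \<le> nat k" "nat k \<le> n" using assms(2,3) by auto
  then show ?thesis using assms(1) by (simp add: tpow_def)
qed

text \<open>An invertible, measure-preserving, ergodic map on a non-atomic probability space.\<close>
locale invertible_ergodic = prob_space M for M :: "'a measure" +
  fixes T :: "'a \<Rightarrow> 'a"
  assumes invertible: "invertible_mp M T"
    and ergodic: "ergodic_map M T"
    and no_atoms: "non_atomic M"
begin

lemma T_measurable: "T \<in> measurable M M"
  using invertible by (simp add: invertible_mp_def)

lemma T_bij: "bij_betw T (space M) (space M)"
  using invertible by (simp add: invertible_mp_def)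

lemma Tn_space: "x \<in> space M \<Longrightarrow> (T ^^ n) x \<in> space M"
  using measurable_space[OF measurable_compose_n[OF T_measurable]] .

lemma Tn_preimage_sets: "A \<in> sets M \<Longrightarrow> (T ^^ n) -` A \<inter> space M \<in> sets M"
  using measurable_sets[OF measurable_compose_n[OF T_measurable]] .

lemma Tn_preimage_measure: "A \<in> sets M \<Longrightarrow> measure M ((T ^^ n) -` A \<inter> space M) = measure M A"
  using invertible by (intro measure_preimage_funpow T_measurable) (auto simp: invertible_mp_def)

text \<open>The inverse map, used to express forward images as measurable preimages.\<close>
definition Tinv :: "'a \<Rightarrow> 'a" where
  "Tinv = the_inv_into (space M) T"

lemma Tinv_measurable: "Tinv \<in> measurable M M"
  using invertible by (simp add: invertible_mp_def Tinv_def)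

lemma Tinv_T: "x \<in> space M \<Longrightarrow> Tinv (T x) = x"
  unfolding Tinv_def using T_bij by (simp add: bij_betw_def the_inv_into_f_f)

lemma T_Tinv: "x \<in> space M \<Longrightarrow> T (Tinv x) = x"
  unfolding Tinv_def using T_bij by (simp add: bij_betw_def f_the_inv_into_f)

lemma Tinv_preimage_measure:
  assumes A: "A \<in> sets M"
  shows "measure M (Tinv -` A \<inter> space M) = measure M A"
proof -
  have "Tinv -` A \<inter> space M \<in> sets M" using measurable_sets[OF Tinv_measurable A] .
  moreover have "T -` (Tinv -` A \<inter> space M) \<inter> space M = A"
    using sets.sets_into_space[OF A] measurable_space[OF T_measurable]
      measurable_space[OF Tinv_measurable] Tinv_T T_Tinv
    by auto
  ultimately show ?thesis
    using invertible by (metis invertible_mp_def)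
qed

text \<open>The forward image T^s(A) of a set, written as a preimage under the inverse map so
  that it is evidently measurable and has the measure of A.\<close>
definition image_Tn :: "nat \<Rightarrow> 'a set \<Rightarrow> 'a set" where
  "image_Tn s A = (Tinv ^^ s) -` A \<inter> space M"

lemma image_Tn_sets: "A \<in> sets M \<Longrightarrow> image_Tn s A \<in> sets M"
  unfolding image_Tn_def using measurable_sets[OF measurable_compose_n[OF Tinv_measurable]] .

lemma image_Tn_measure: "A \<in> sets M \<Longrightarrow> measure M (image_Tn s A) = measure M A"
  unfolding image_Tn_def by (rule measure_preimage_funpow[OF Tinv_measurable Tinv_preimage_measure])

lemma image_Tn_mem:
  assumes "z \<in> A" "z \<in> space M"
  shows "(T ^^ s) z \<in> image_Tn s A"
proof -
  have "(Tinv ^^ s) ((T ^^ s) z) = z" if "z \<in> space M" for z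
    using that
  proof (induction s arbitrary: z)
    case (Suc s)
    have T_step: "(T ^^ Suc s) z = T ((T ^^ s) z)" by simp
    have Tinv_step: "(Tinv ^^ Suc s) y = (Tinv ^^ s) (Tinv y)" for y by (simp add: funpow_swap1)
    show ?case
      unfolding T_step Tinv_step Tinv_T[OF Tn_space[OF Suc.prems]] by (rule Suc.IH[OF Suc.prems])
  qed simp
  then show ?thesis unfolding image_Tn_def using assms Tn_space by auto
qed

text \<open>Recurrence: by measure preservation the set of points visiting A infinitely often is
  invariant and has measure at least that of A, so by ergodicity it has full measure.\<close>
lemma recurrence:
  assumes A: "A \<in> sets M" "0 < measure M A"
  shows "AE x in M. \<forall>N. \<exists>n\<ge>N. (T ^^ n) x \<in> A"
proof -
  define V where "V = (\<Union>n. (T ^^ n) -` A \<inter> space M)"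
  define U where "U N = (T ^^ N) -` V \<inter> space M" for N
  have V: "V \<in> sets M" unfolding V_def by (intro sets.countable_UN'') (auto intro: Tn_preimage_sets A(1))
  have U: "U N \<in> sets M" for N unfolding U_def using Tn_preimage_sets[OF V] .
  have U_iff: "x \<in> U N \<longleftrightarrow> x \<in> space M \<and> (\<exists>n\<ge>N. (T ^^ n) x \<in> A)" for x N
  proof -
    have shift: "(T ^^ m) ((T ^^ N) x) = (T ^^ (m + N)) x" for m by (simp add: funpow_add)
    have "(\<exists>m. (T ^^ (m + N)) x \<in> A) \<longleftrightarrow> (\<exists>n\<ge>N. (T ^^ n) x \<in> A)"
      by (metis le_add2 le_add_diff_inverse2)
    have "x \<in> U N \<longleftrightarrow> x \<in> space M \<and> (\<exists>m. (T ^^ (m + N)) x \<in> A)"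
      unfolding U_def V_def shift[symmetric] by (auto simp: Tn_space)
    with \<open>(\<exists>m. _) \<longleftrightarrow> _\<close> show ?thesis by simp
  qed
  have U_dec: "U (Suc N) \<subseteq> U N" for N
    by (auto simp: U_iff) (meson Suc_leD)
  define R where "R = (\<Inter>N. U N)"
  have R: "R \<in> sets M" unfolding R_def using U by auto
  have "(\<lambda>N. measure M (U N)) \<longlonglongrightarrow> measure M R"
    unfolding R_def by (rule finite_Lim_measure_decseq) (auto simp: U decseq_Suc_iff U_dec)
  moreover have "measure M (U N) = measure M V" for N
    unfolding U_def by (rule Tn_preimage_measure[OF V])
  ultimately have "measure M R = measure M V" by (simp add: LIMSEQ_const_iff)
  moreover have "measure M A \<le> measure M V"
    using A(1) V sets.sets_into_space[OF A(1)]
    by (intro finite_measure_mono) (auto simp: V_def intro!: exI[of _ 0])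
  ultimately have R_pos: "0 < measure M R" using A(2) by simp
  have U_shift: "T x \<in> U N \<longleftrightarrow> x \<in> U (Suc N)" if "x \<in> space M" for x N
    using that measurable_space[OF T_measurable]
    by (simp add: U_def funpow_swap1)
  have "T x \<in> R \<longleftrightarrow> x \<in> R" if "x \<in> space M" for x
    unfolding R_def using U_shift[OF that] U_dec by blast
  then have "T -` R \<inter> space M = R"
    using R sets.sets_into_space by blast
  then have "measure M R = 1"
    using ergodic R R_pos unfolding ergodic_map_def by force
  then have "AE x in M. x \<in> R" by (rule AE_prob_1)
  then show ?thesis by eventually_elim (auto simp: R_def U_iff)
qed

text \<open>Without atoms every set of positive measure can be halved, which yields sets of
  arbitrarily small positive measure.\<close>
lemma halve_set:
  assumes A: "A \<in> sets M" "0 < measure M A"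
  shows "\<exists>B\<in>sets M. 0 < measure M B \<and> measure M B \<le> measure M A / 2"
proof -
  have "\<not> atom M A" using no_atoms unfolding non_atomic_def by blast
  then obtain B where B: "B \<in> sets M" "B \<subseteq> A" "measure M B \<noteq> 0" "measure M B \<noteq> measure M A"
    using A unfolding atom_def by blast
  have "0 < measure M B" using B(3) measure_nonneg[of M B] by linarith
  have "measure M B \<le> measure M A" by (rule finite_measure_mono[OF B(2) A(1)])
  moreover have "measure M (A - B) = measure M A - measure M B"
    by (rule finite_measure_Diff[OF A(1) B(1,2)])
  ultimately show ?thesis
  proof (cases "measure M B \<le> measure M A / 2")
    case True
    then show ?thesis using B \<open>0 < measure M B\<close> by (auto intro!: bexI[of _ B])
  next
    case False
    then show ?thesis
      using B A(1) \<open>measure M (A - B) = _\<close> \<open>measure M B \<le> _\<close> by (auto intro!: bexI[of _ "A - B"])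
  qed
qed

lemma small_set:
  assumes "0 < \<delta>"
  shows "\<exists>A\<in>sets M. 0 < measure M A \<and> measure M A \<le> \<delta>"
proof -
  have "\<exists>A\<in>sets M. 0 < measure M A \<and> measure M A \<le> (1/2)^n" for n
  proof (induction n)
    case 0
    show ?case using prob_space by (intro bexI[of _ "space M"]) auto
  next
    case (Suc n)
    then show ?case using halve_set by fastforce
  qed
  moreover obtain n where "(1/2::real)^n < \<delta>"
    using real_arch_pow_inv[OF assms, of "1/2"] by auto
  ultimately show ?thesis by (meson less_imp_le order_trans)
qed

end

context invertible_ergodic
begin

definition rapidly_shrinking :: "(nat \<Rightarrow> 'a set) \<Rightarrow> bool" where
  "rapidly_shrinking W \<longleftrightarrow> (\<forall>n. W n \<in> sets M \<and> 0 < measure M (W n) \<and>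
     (real n + 2) * measure M (W (Suc n)) \<le> measure M (W n) / 4)"

lemma rapidly_shrinking_exists:
  assumes "0 < \<delta>"
  shows "\<exists>W. rapidly_shrinking W \<and> measure M (W 0) \<le> \<delta>"
proof -
  define P where "P n A \<longleftrightarrow> A \<in> sets M \<and> 0 < measure M A \<and> (n = 0 \<longrightarrow> measure M A \<le> \<delta>)"
    for n :: nat and A
  have "\<exists>W. \<forall>n. P n (W n) \<and> (real n + 2) * measure M (W (Suc n)) \<le> measure M (W n) / 4"
  proof (rule dependent_nat_choice)
    show "\<exists>A. P 0 A" using small_set[OF assms] unfolding P_def by auto
  next
    fix A n assume "P n A"
    then have "0 < measure M A / (4 * (real n + 2))" unfolding P_def by simp
    from small_set[OF this] obtain A' where A': "A' \<in> sets M" "0 < measure M A'"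
      "measure M A' \<le> measure M A / (4 * (real n + 2))" by blast
    then have "(real n + 2) * measure M A' \<le> measure M A / 4"
      by (simp add: field_simps)
    with A' show "\<exists>A'. P (Suc n) A' \<and> (real n + 2) * measure M A' \<le> measure M A / 4"
      unfolding P_def by auto
  qed
  then show ?thesis unfolding rapidly_shrinking_def P_def by blast
qed

lemma rapidly_shrinking_bound:
  assumes W: "rapidly_shrinking W" and "k < j" "L \<le> j"
  shows "(real L + 1) * measure M (W j) \<le> measure M (W k) * (1/4) ^ (j - k)"
proof -
  have "(real L + 1) * measure M (W j) \<le> (real j + 1) * measure M (W j)"
    using \<open>L \<le> j\<close> by (intro mult_right_mono) auto
  also have "\<dots> \<le> measure M (W k) * (1/4) ^ (j - k)"
    using W \<open>k < j\<close> unfolding rapidly_shrinking_def by (intro rapid_decay) auto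
  finally show ?thesis .
qed

lemma rapidly_shrinking_remove_pos:
  assumes W: "rapidly_shrinking W"
    and X: "\<And>s n. X s n \<in> sets M" "\<And>s n. measure M (X s n) = measure M (W (k + 2*n + 1))"
  shows "0 < measure M (W k - (\<Union>n. \<Union>s\<in>{..k+n}. X s n))"
proof (rule measure_Diff_UN_pos)
  show "W k \<in> sets M" "0 < measure M (W k)" using W unfolding rapidly_shrinking_def by auto
  show "(\<Union>s\<in>{..k+n}. X s n) \<in> sets M" for n using X(1) by auto
  fix n
  have "measure M (\<Union>s\<in>{..k+n}. X s n) \<le> (real (k + n) + 1) * measure M (W (k + 2*n + 1))"
    by (rule measure_UN_atMost_le) (use X in auto)
  also have "\<dots> \<le> measure M (W k) * (1/4) ^ (2*n + 1)"
    using rapidly_shrinking_bound[OF W, of k "k + 2*n + 1" "k + n"] by simp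
  also have "\<dots> \<le> measure M (W k) * (1/4) ^ (n + 1)"
    by (intro mult_left_mono power_decreasing) auto
  finally show "measure M (\<Union>s\<in>{..k+n}. X s n) \<le> measure M (W k) / 4 * (1/4) ^ n"
    by simp
qed

text \<open>The sweeping set is built from the top levels tower_top W a of towers of height a + 1:
  it contains the a + 1 points of every orbit segment ending in tower_top W a. The sets
  gap_base W b are chosen so that orbit segments of length b + 1 starting there miss it.
  Both families are carved out of disjoint levels of the sequence W, which is why they do
  not interfere.\<close>
definition tower_top :: "(nat \<Rightarrow> 'a set) \<Rightarrow> nat \<Rightarrow> 'a set" where
  "tower_top W a = W (2*a) - (\<Union>n. \<Union>s\<in>{..2*a+n}. image_Tn s (W (2*a + 2*n + 1)))"

definition gap_base :: "(nat \<Rightarrow> 'a set) \<Rightarrow> nat \<Rightarrow> 'a set" where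
  "gap_base W b = W (2*b+1) - (\<Union>n. \<Union>s\<in>{..2*b+1+n}. (T ^^ s) -` W (2*b+1 + 2*n + 1) \<inter> space M)"

definition sweep_set :: "(nat \<Rightarrow> 'a set) \<Rightarrow> 'a set" where
  "sweep_set W = (\<Union>a. \<Union>i\<in>{..a}. (T ^^ i) -` tower_top W a \<inter> space M)"

lemma tower_top_sets: "rapidly_shrinking W \<Longrightarrow> tower_top W a \<in> sets M"
  unfolding tower_top_def
  by (intro sets.Diff sets.countable_UN'' sets.finite_UN image_Tn_sets) (auto simp: rapidly_shrinking_def)

lemma gap_base_sets: "rapidly_shrinking W \<Longrightarrow> gap_base W b \<in> sets M"
  unfolding gap_base_def
  by (intro sets.Diff sets.countable_UN'' sets.finite_UN Tn_preimage_sets) (auto simp: rapidly_shrinking_def)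

lemma sweep_set_sets: "rapidly_shrinking W \<Longrightarrow> sweep_set W \<in> sets M"
  unfolding sweep_set_def
  by (intro sets.countable_UN'' sets.finite_UN Tn_preimage_sets tower_top_sets) auto

lemma tower_top_pos: "rapidly_shrinking W \<Longrightarrow> 0 < measure M (tower_top W a)"
  unfolding tower_top_def
  by (rule rapidly_shrinking_remove_pos) (auto simp: rapidly_shrinking_def image_Tn_sets image_Tn_measure)

lemma gap_base_pos: "rapidly_shrinking W \<Longrightarrow> 0 < measure M (gap_base W b)"
  unfolding gap_base_def
  by (rule rapidly_shrinking_remove_pos) (auto simp: rapidly_shrinking_def Tn_preimage_sets Tn_preimage_measure)

lemma sweep_set_measure:
  assumes W: "rapidly_shrinking W"
  shows "measure M (sweep_set W) \<le> measure M (W 0) * (4/3)"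
  unfolding sweep_set_def
proof (rule measure_UN_geometric_le)
  show "(\<Union>i\<in>{..a}. (T ^^ i) -` tower_top W a \<inter> space M) \<in> sets M" for a
    using W by (intro sets.finite_UN Tn_preimage_sets tower_top_sets) auto
  fix a
  have top_le: "measure M (tower_top W a) \<le> measure M (W (2*a))"
    using W unfolding tower_top_def rapidly_shrinking_def by (intro finite_measure_mono) auto
  have "measure M (\<Union>i\<in>{..a}. (T ^^ i) -` tower_top W a \<inter> space M) \<le> (real a + 1) * measure M (W (2*a))"
    using W top_le by (intro measure_UN_atMost_le) (auto simp: Tn_preimage_sets Tn_preimage_measure tower_top_sets)
  also have "\<dots> \<le> measure M (W 0) * (1/4) ^ a"
  proof (cases "a = 0")
    case False
    then have "(real a + 1) * measure M (W (2*a)) \<le> measure M (W 0) * (1/4) ^ (2*a)"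
      using rapidly_shrinking_bound[OF W, of 0 "2*a" a] by simp
    also have "\<dots> \<le> measure M (W 0) * (1/4) ^ a"
      using W unfolding rapidly_shrinking_def by (intro mult_left_mono power_decreasing) auto
    finally show ?thesis .
  qed simp
  finally show "measure M (\<Union>i\<in>{..a}. (T ^^ i) -` tower_top W a \<inter> space M) \<le> measure M (W 0) * (1/4) ^ a" .
qed

lemma gap_base_avoids_sweep_set:
  assumes W: "rapidly_shrinking W" and z: "z \<in> gap_base W b" and "t \<le> b"
  shows "(T ^^ t) z \<notin> sweep_set W"
proof
  assume "(T ^^ t) z \<in> sweep_set W"
  then obtain a i where "i \<le> a" and "(T ^^ i) ((T ^^ t) z) \<in> tower_top W a"
    unfolding sweep_set_def by auto
  then have top: "(T ^^ (i + t)) z \<in> tower_top W a" by (simp add: funpow_add)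
  have z_in: "z \<in> W (2*b+1)" "z \<in> space M"
    using z sets.sets_into_space W unfolding gap_base_def rapidly_shrinking_def by auto
  show False
  proof (cases "a \<le> b")
    case True
    have "2*a + 2*(b - a) + 1 = 2*b + 1" using True by simp
    then have "(T ^^ (i + t)) z \<in> image_Tn (i + t) (W (2*a + 2*(b - a) + 1))"
      using image_Tn_mem[OF z_in] by simp
    moreover have "i + t \<le> 2*a + (b - a)" using True \<open>i \<le> a\<close> \<open>t \<le> b\<close> by simp
    ultimately show False using top unfolding tower_top_def by blast
  next
    case False
    have "2*b+1 + 2*(a - b - 1) + 1 = 2*a" using False by simp
    then have "(T ^^ (i + t)) z \<in> W (2*b+1 + 2*(a - b - 1) + 1)"
      using top unfolding tower_top_def by simp
    moreover have "i + t \<le> 2*b+1 + (a - b - 1)" using False \<open>i \<le> a\<close> \<open>t \<le> b\<close> by simp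
    ultimately show False using z z_in unfolding gap_base_def by blast
  qed
qed

end

context invertible_ergodic
begin

lemma small_set_with_long_runs:
  assumes "0 < e"
  shows "\<exists>B\<in>sets M. measure M B < e \<and>
    (AE x in M. \<forall>a N. \<exists>n\<ge>N. a \<le> n \<and> (\<forall>k. n - a \<le> k \<longrightarrow> k \<le> n \<longrightarrow> (T ^^ k) x \<in> B)) \<and>
    (AE x in M. \<forall>a N. \<exists>n\<ge>N. a \<le> n \<and> (\<forall>k. n - a \<le> k \<longrightarrow> k \<le> n \<longrightarrow> (T ^^ k) x \<notin> B))"
proof -
  obtain W where W: "rapidly_shrinking W" "measure M (W 0) \<le> e / 2"
    using rapidly_shrinking_exists[of "e / 2"] assms by auto
  define B where "B = sweep_set W"
  have "measure M B < e"
    using sweep_set_measure[OF W(1)] W(2) assms unfolding B_def by simp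
  have tops: "AE x in M. \<forall>a N. \<exists>n\<ge>N. (T ^^ n) x \<in> tower_top W a"
    using W(1) by (subst AE_all_countable) (intro allI recurrence tower_top_sets tower_top_pos)
  have gaps: "AE x in M. \<forall>a N. \<exists>n\<ge>N. (T ^^ n) x \<in> gap_base W a"
    using W(1) by (subst AE_all_countable) (intro allI recurrence gap_base_sets gap_base_pos)
  have runs_inside: "\<exists>n\<ge>N. a \<le> n \<and> (\<forall>k. n - a \<le> k \<longrightarrow> k \<le> n \<longrightarrow> (T ^^ k) x \<in> B)"
    if x: "x \<in> space M" and visits: "\<forall>N. \<exists>n\<ge>N. (T ^^ n) x \<in> tower_top W a" for x a N
  proof -
    obtain n where n: "n \<ge> max N a" "(T ^^ n) x \<in> tower_top W a" using visits by blast
    have "(T ^^ k) x \<in> B" if "n - a \<le> k" "k \<le> n" for k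
    proof -
      have "(T ^^ ((n - k) + k)) x = (T ^^ (n - k)) ((T ^^ k) x)"
        by (simp only: funpow_add comp_apply)
      then have "(T ^^ k) x \<in> (T ^^ (n - k)) -` tower_top W a \<inter> space M"
        using n(2) \<open>k \<le> n\<close> Tn_space[OF x] by simp
      moreover have "n - k \<le> a" using \<open>n - a \<le> k\<close> by simp
      ultimately show ?thesis unfolding B_def sweep_set_def by blast
    qed
    then show ?thesis using n(1) by auto
  qed
  have runs_outside: "\<exists>n\<ge>N. a \<le> n \<and> (\<forall>k. n - a \<le> k \<longrightarrow> k \<le> n \<longrightarrow> (T ^^ k) x \<notin> B)"
    if visits: "\<forall>N. \<exists>n\<ge>N. (T ^^ n) x \<in> gap_base W a" for x a N
  proof -
    obtain m where m: "m \<ge> N" "(T ^^ m) x \<in> gap_base W a" using visits by blast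
    have "(T ^^ k) x \<notin> B" if "m \<le> k" "k \<le> m + a" for k
    proof -
      have "(T ^^ ((k - m) + m)) x = (T ^^ (k - m)) ((T ^^ m) x)"
        by (simp only: funpow_add comp_apply)
      then have "(T ^^ k) x = (T ^^ (k - m)) ((T ^^ m) x)"
        using \<open>m \<le> k\<close> by simp
      then show ?thesis
        using gap_base_avoids_sweep_set[OF W(1) m(2)] that unfolding B_def by simp
    qed
    then show ?thesis using m(1) by (intro exI[of _ "m + a"]) auto
  qed
  show ?thesis
  proof (intro bexI[of _ B] conjI)
    show "AE x in M. \<forall>a N. \<exists>n\<ge>N. a \<le> n \<and> (\<forall>k. n - a \<le> k \<longrightarrow> k \<le> n \<longrightarrow> (T ^^ k) x \<in> B)"
      using tops AE_space by eventually_elim (use runs_inside in blast)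
    show "AE x in M. \<forall>a N. \<exists>n\<ge>N. a \<le> n \<and> (\<forall>k. n - a \<le> k \<longrightarrow> k \<le> n \<longrightarrow> (T ^^ k) x \<notin> B)"
      using gaps by eventually_elim (use runs_outside in blast)
    show "B \<in> sets M" unfolding B_def by (rule sweep_set_sets[OF W(1)])
  qed fact
qed

theorem strong_sweeping_out_if_concentrated:
  assumes prob: "\<And>n. finite_prob (\<mu> n)"
    and conc: "\<And>\<epsilon>. 0 < \<epsilon> \<Longrightarrow> \<exists>K::nat. \<forall>n. 1 - \<epsilon> \<le> sum (\<mu> n) {int n - int K..int n}"
  shows "strong_sweeping_out M T \<mu>"
  unfolding strong_sweeping_out_def
proof (intro allI impI)
  fix e :: real assume "0 < e"
  then obtain B where B: "B \<in> sets M" "measure M B < e"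
    and inside: "AE x in M. \<forall>a N. \<exists>n\<ge>N. a \<le> n \<and> (\<forall>k. n - a \<le> k \<longrightarrow> k \<le> n \<longrightarrow> (T ^^ k) x \<in> B)"
    and outside: "AE x in M. \<forall>a N. \<exists>n\<ge>N. a \<le> n \<and> (\<forall>k. n - a \<le> k \<longrightarrow> k \<le> n \<longrightarrow> (T ^^ k) x \<notin> B)"
    using small_set_with_long_runs by blast
  define F where "F x n = apply_meas M T (\<mu> n) (indicator B) x" for x n
  note bounds = weighted_mass_bounds[OF prob, where g = "\<lambda>k. indicator B (tpow M T k x)" for x,
      unfolded apply_meas_def[symmetric] F_def[symmetric]]
  have limsup_1: "limsup (\<lambda>n. ereal (F x n)) = 1"
    if runs: "\<forall>a N. \<exists>n\<ge>N. a \<le> n \<and> (\<forall>k. n - a \<le> k \<longrightarrow> k \<le> n \<longrightarrow> (T ^^ k) x \<in> B)" for x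
  proof (rule limsup_eq_1_if_frequently_near_1)
    show "F x n \<le> 1" for n using bounds(2)[where W = "{}"] by auto
    fix \<epsilon> :: real and N assume "0 < \<epsilon>"
    with conc obtain K where K: "\<And>n. 1 - \<epsilon> \<le> sum (\<mu> n) {int n - int K..int n}" by blast
    from runs obtain n where n: "n \<ge> N" "K \<le> n" "\<And>k. n - K \<le> k \<Longrightarrow> k \<le> n \<Longrightarrow> (T ^^ k) x \<in> B"
      by blast
    have "tpow M T k x \<in> B" if "k \<in> {int n - int K..int n}" for k
      by (rule tpow_window[where P = "\<lambda>y. y \<in> B"]) (use n that in auto)
    then have "sum (\<mu> n) {int n - int K..int n} \<le> F x n"
      by (intro bounds(1)) auto
    then show "\<exists>n\<ge>N. 1 - \<epsilon> \<le> F x n" using K[of n] n(1) by force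
  qed
  have liminf_0: "liminf (\<lambda>n. ereal (F x n)) = 0"
    if runs: "\<forall>a N. \<exists>n\<ge>N. a \<le> n \<and> (\<forall>k. n - a \<le> k \<longrightarrow> k \<le> n \<longrightarrow> (T ^^ k) x \<notin> B)" for x
  proof (rule liminf_eq_0_if_frequently_near_0)
    show "0 \<le> F x n" for n using bounds(1)[where W = "{}"] by auto
    fix \<epsilon> :: real and N assume "0 < \<epsilon>"
    with conc obtain K where K: "\<And>n. 1 - \<epsilon> \<le> sum (\<mu> n) {int n - int K..int n}" by blast
    from runs obtain n where n: "n \<ge> N" "K \<le> n" "\<And>k. n - K \<le> k \<Longrightarrow> k \<le> n \<Longrightarrow> (T ^^ k) x \<notin> B"
      by blast
    have "tpow M T k x \<notin> B" if "k \<in> {int n - int K..int n}" for k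
      by (rule tpow_window[where P = "\<lambda>y. y \<notin> B"]) (use n that in auto)
    then have "F x n \<le> 1 - sum (\<mu> n) {int n - int K..int n}"
      by (intro bounds(2)) auto
    then show "\<exists>n\<ge>N. F x n \<le> \<epsilon>" using K[of n] n(1) by force
  qed
  show "\<exists>B\<in>sets M. measure M B < e \<and>
      (AE x in M. limsup (\<lambda>n. ereal (apply_meas M T (\<mu> n) (indicator B) x)) = 1) \<and>
      (AE x in M. liminf (\<lambda>n. ereal (apply_meas M T (\<mu> n) (indicator B) x)) = 0)"
  proof (intro bexI[of _ B] conjI)
    show "AE x in M. limsup (\<lambda>n. ereal (apply_meas M T (\<mu> n) (indicator B) x)) = 1"
      using inside by (rule eventually_mono) (use limsup_1 in \<open>simp add: F_def\<close>)
    show "AE x in M. liminf (\<lambda>n. ereal (apply_meas M T (\<mu> n) (indicator B) x)) = 0"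
      using outside by (rule eventually_mono) (use liminf_0 in \<open>simp add: F_def\<close>)
  qed (use B in auto)
qed

end

theorem mainTheorem14:
  fixes a :: "nat \<Rightarrow> real"
  assumes "\<forall>n\<ge>1. 0 < a n \<and> a n < 1"
    and "summable (\<lambda>n. 1 - a (Suc n))"
  shows "(\<forall>n\<ge>1. expect_int (nu_b \<lfloor>1 / (1 - a n)\<rfloor>) = 0 \<and>
            moment2_int (nu_b \<lfloor>1 / (1 - a n)\<rfloor>) =
              (2 * (of_int \<lfloor>1 / (1 - a n)\<rfloor>)^2 + 4 * of_int \<lfloor>1 / (1 - a n)\<rfloor> + 2)
                / (3 + 2 * of_int \<lfloor>1 / (1 - a n)\<rfloor>))
       \<and> (\<forall>(M :: 'x measure) T. ergodic_system M T \<longrightarrow>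
            strong_sweeping_out M T (mu_seq (\<lambda>n. nu_b \<lfloor>1 / (1 - a n)\<rfloor>)))"
proof -
  define bs where "bs n = \<lfloor>1 / (1 - a n)\<rfloor>" for n
  have bs_ge: "\<forall>n\<ge>1. 1 \<le> bs n"
    using assms(1) back_mass_floor(1) unfolding bs_def by blast
  have "summable (\<lambda>i. back_mass (bs (Suc i)))"
    using assms back_mass_floor(2) back_mass_nonneg bs_ge unfolding bs_def
    by (intro summable_comparison_test'[OF assms(2)]) auto
  then have concentrated: "\<exists>K::nat. \<forall>n. 1 - \<epsilon> \<le> sum (mu_seq (\<lambda>n. nu_b (bs n)) n) {int n - int K..int n}"
    if "0 < \<epsilon>" for \<epsilon>
    using mu_seq_concentrated[OF bs_ge _ that] by blast
  show ?thesis
    unfolding bs_def[symmetric]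
  proof (intro conjI allI impI)
    fix n :: nat assume "n \<ge> 1"
    then have "1 \<le> bs n" using bs_ge by blast
    then show "expect_int (nu_b (bs n)) = 0"
      and "moment2_int (nu_b (bs n)) = (2 * (of_int (bs n))^2 + 4 * of_int (bs n) + 2) / (3 + 2 * of_int (bs n))"
      by (rule expect_nu_b, rule moment2_nu_b)
  next
    fix M :: "'x measure" and T assume "ergodic_system M T"
    then have "invertible_ergodic M T"
      unfolding ergodic_system_def invertible_ergodic_def invertible_ergodic_axioms_def by auto
    then show "strong_sweeping_out M T (mu_seq (\<lambda>n. nu_b (bs n)))"
      by (rule invertible_ergodic.strong_sweeping_out_if_concentrated[OF _ finite_prob_mu_seq[OF bs_ge] concentrated])
  qed
qed

end
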